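(* There exist a finite family $\mathcal{F}$ of pairwise intersecting compact convex sets in the plane with the $(4,3)$ property (among any four distinct members some three have a common point) and a member $D\in\mathcal{F}$ such that the directed graph $G_D$ contains a directed cycle of length 5.
   Context: For three pairwise intersecting compact convex sets $X,Y,Z$ in the plane: $o(XYZ)=0$ if $X\cap Y\cap Z\neq\emptyset$; otherwise $o(XYZ)=o(xyz)$ for any $x\in Y\cap Z$, $y\in X\cap Z$, $z\in X\cap Y$, where for points $o(xyz)=+1$ for a counterclockwise and $-1$ for a clockwise triangle (independent of the choice). For $D\in\mathcal{F}$, $G_D$ is the directed graph on vertex set $\mathcal{F}\setminus\{D\}$ with an arc from $A$ to $B$ if and only if $o(ABD)=1$. *)

theory Defs
  imports "HOL-Analysis.Analysis"
begin

definition orient_pts :: "real^2 \<Rightarrow> real^2 \<Rightarrow> real^2 \<Rightarrow> int" where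
  "orient_pts x y z =
     (let d = (y$1 - x$1) * (z$2 - x$2) - (y$2 - x$2) * (z$1 - x$1)
      in if d > 0 then 1 else if d < 0 then -1 else 0)"

text \<open>Orientation of three pairwise intersecting sets: 0 if they share a point,
  otherwise the orientation of chosen points x in Y\<inter>Z, y in X\<inter>Z, z in X\<inter>Y
  (the paper shows this is independent of the choice).\<close>

definition orient_sets :: "(real^2) set \<Rightarrow> (real^2) set \<Rightarrow> (real^2) set \<Rightarrow> int" where
  "orient_sets X Y Z =
     (if X \<inter> Y \<inter> Z \<noteq> {} then 0
      else orient_pts (SOME x. x \<in> Y \<inter> Z) (SOME y. y \<in> X \<inter> Z) (SOME z. z \<in> X \<inter> Y))"

definition arc_G :: "(real^2) set set \<Rightarrow> (real^2) set \<Rightarrow> (real^2) set \<Rightarrow> (real^2) set \<Rightarrow> bool" where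
  "arc_G F D A B \<longleftrightarrow> A \<in> F - {D} \<and> B \<in> F - {D} \<and> orient_sets A B D = 1"

definition pairwise_intersecting :: "'a set set \<Rightarrow> bool" where
  "pairwise_intersecting F \<longleftrightarrow> (\<forall>A\<in>F. \<forall>B\<in>F. A \<inter> B \<noteq> {})"

definition prop_43 :: "'a set set \<Rightarrow> bool" where
  "prop_43 F \<longleftrightarrow> (\<forall>G \<subseteq> F. card G = 4 \<longrightarrow>
      (\<exists>H \<subseteq> G. card H = 3 \<and> \<Inter>H \<noteq> {}))"

end

theory Submission
  imports Defs
begin

(* Let D be a convex pentagon with edges e_0, ..., e_4 in counterclockwise order, and let A_k be
   the closed half-plane beyond the line of e_k, cut down to a large square. Then A_k meets D
   exactly in e_k, so D, A_j, A_k share a point iff e_j and e_k are adjacent, while A_k, A_(k+1),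
   A_(k+2) share the tip of the pentagram spanned by the lines of e_k and e_(k+2). Since among any
   three indices of the 5-cycle two are adjacent and among any four three are consecutive, the
   family has the (4,3) property. Finally, for points of e_(k+2), e_k and A_k \<inter> A_(k+2) the
   triangle is always counterclockwise, so following the pentagram A_0, A_2, A_4, A_1, A_3 gives
   a directed 5-cycle in G_D. *)

lemma inner_vector_2 [simp]: "vector [a, b] \<bullet> (p :: real^2) = a * p$1 + b * p$2"
  by (simp add: inner_vec_def sum_2)

lemma orient_pts_eq_1_between_lines:
  fixes u v x y z :: "real^2"
  assumes x: "u \<bullet> x = a" "v \<bullet> x < b" and y: "v \<bullet> y = b" "u \<bullet> y < a"
    and z: "a \<le> u \<bullet> z" "b \<le> v \<bullet> z"
    and uv: "u$1 * v$2 - u$2 * v$1 < 0"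
  shows "orient_pts x y z = 1"
proof -
  define det where "det = (y$1 - x$1) * (z$2 - x$2) - (y$2 - x$2) * (z$1 - x$1)"
  have "det * (u$1 * v$2 - u$2 * v$1) =
      - ((b - v \<bullet> x) * (a - u \<bullet> y) + (a - u \<bullet> y) * (v \<bullet> z - b) + (b - v \<bullet> x) * (u \<bullet> z - a))"
    unfolding det_def x(1)[symmetric] y(1)[symmetric] by (simp add: inner_vec_def sum_2 algebra_simps)
  also have "\<dots> < 0"
  proof -
    have "(b - v \<bullet> x) * (a - u \<bullet> y) > 0" "(a - u \<bullet> y) * (v \<bullet> z - b) \<ge> 0"
      "(b - v \<bullet> x) * (u \<bullet> z - a) \<ge> 0"
      using x y z by simp_all
    then show ?thesis by linarith
  qed
  finally have "det > 0"
    using uv by (simp add: mult_less_0_iff)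
  then show ?thesis
    by (simp add: orient_pts_def det_def)
qed

lemma orient_sets_eq_1I:
  assumes "X \<inter> Y \<inter> Z = {}" "Y \<inter> Z \<noteq> {}" "X \<inter> Z \<noteq> {}" "X \<inter> Y \<noteq> {}"
    and "\<And>x y z. x \<in> Y \<inter> Z \<Longrightarrow> y \<in> X \<inter> Z \<Longrightarrow> z \<in> X \<inter> Y \<Longrightarrow> orient_pts x y z = 1"
  shows "orient_sets X Y Z = 1"
  using assms some_in_eq[of "Y \<inter> Z"] some_in_eq[of "X \<inter> Z"] some_in_eq[of "X \<inter> Y"]
  by (simp add: orient_sets_def)

lemma orient_sets_beyond_two_lines:
  fixes u v :: "real^2"
  assumes X: "X = B \<inter> {p. b \<le> v \<bullet> p}" and Y: "Y = B \<inter> {p. a \<le> u \<bullet> p}"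
    and Z: "Z \<subseteq> B \<inter> {p. u \<bullet> p \<le> a} \<inter> {p. v \<bullet> p \<le> b}"
    and uv: "u$1 * v$2 - u$2 * v$1 < 0"
    and "X \<inter> Y \<inter> Z = {}" "Y \<inter> Z \<noteq> {}" "X \<inter> Z \<noteq> {}" "X \<inter> Y \<noteq> {}"
  shows "orient_sets X Y Z = 1"
  using assms(5-)
proof (rule orient_sets_eq_1I)
  fix x y z
  assume "x \<in> Y \<inter> Z" "y \<in> X \<inter> Z" "z \<in> X \<inter> Y"
  moreover have "x \<notin> X" "y \<notin> Y"
    using \<open>X \<inter> Y \<inter> Z = {}\<close> \<open>x \<in> Y \<inter> Z\<close> \<open>y \<in> X \<inter> Z\<close> by blast+
  ultimately show "orient_pts x y z = 1"
    using Z uv by (intro orient_pts_eq_1_between_lines[of u x a v b]) (auto simp: X Y)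
qed

lemma less_5_cases:
  assumes "k < (5::nat)"
  obtains "k = 0" | "k = 1" | "k = 2" | "k = 3" | "k = 4"
  using assms by linarith

lemma all_less_5: "(\<forall>k<5::nat. P k) \<longleftrightarrow> P 0 \<and> P 1 \<and> P 2 \<and> P 3 \<and> P 4"
  by (auto elim!: less_5_cases)

lemma cycle5_three_has_adjacent:
  assumes "K \<subseteq> {..<5}" "card K = 3"
  shows "\<exists>k\<in>K. Suc k mod 5 \<in> K"
proof (rule ccontr)
  assume no_adjacent: "\<not> ?thesis"
  let ?succ = "\<lambda>k. Suc k mod 5"
  have "inj_on ?succ {..<5}"
    by (auto simp: inj_on_def mod_Suc split: if_splits)
  then have "inj_on ?succ K"
    using assms(1) by (rule inj_on_subset)
  then have "card (K \<union> ?succ ` K) = 6"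
    using no_adjacent assms finite_subset[OF assms(1)] by (subst card_Un_disjoint) (auto simp: card_image)
  moreover have "K \<union> ?succ ` K \<subseteq> {..<5}"
    using assms(1) by auto
  ultimately show False
    using card_mono[of "{..<5::nat}" "K \<union> ?succ ` K"] by simp
qed

lemma cycle5_four_has_window:
  assumes "K \<subseteq> {..<5}" "card K = 4"
  shows "\<exists>k\<in>K. Suc k mod 5 \<in> K \<and> Suc (Suc k) mod 5 \<in> K"
proof -
  have "card ({..<5} - K) = 1"
    using assms by (simp add: card_Diff_subset finite_subset)
  then obtain e where e: "{..<5} - K = {e}"
    by (rule card_1_singletonE)
  then have "e < 5" "\<And>k. k < 5 \<Longrightarrow> k \<noteq> e \<Longrightarrow> k \<in> K"
    by auto
  then show ?thesis
    by (intro bexI[of _ "Suc e mod 5"]) (auto elim!: less_5_cases)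
qed

lemma cycle5_pair_in_window:
  assumes "j < 5" "k < 5"
  shows "\<exists>m<5. {j, k} \<subseteq> {m, Suc m mod 5, Suc (Suc m) mod 5}"
  using assms
  by (intro exI[of _ "if (k + 5 - j) mod 5 \<le> 2 then j else k"]) (auto elim!: less_5_cases)

lemma prop_43_image:
  assumes inj: "inj_on S I"
    and triples: "\<And>J. J \<subseteq> I \<Longrightarrow> card J = 4 \<Longrightarrow> \<exists>J'\<subseteq>J. card J' = 3 \<and> \<Inter>(S ` J') \<noteq> {}"
  shows "prop_43 (S ` I)"
  unfolding prop_43_def
proof (intro allI impI)
  fix G
  assume "G \<subseteq> S ` I" "card G = 4"
  define J where "J = I \<inter> S -` G"
  have "G = S ` J" "J \<subseteq> I"
    using \<open>G \<subseteq> S ` I\<close> by (auto simp: J_def)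
  moreover have "inj_on S J"
    using inj by (rule inj_on_subset) (simp add: J_def)
  ultimately have "card J = 4"
    using \<open>card G = 4\<close> by (simp add: card_image)
  then obtain J' where "J' \<subseteq> J" "card J' = 3" "\<Inter>(S ` J') \<noteq> {}"
    using triples \<open>J \<subseteq> I\<close> by blast
  moreover have "card (S ` J') = card J'"
    using \<open>inj_on S J\<close> \<open>J' \<subseteq> J\<close> by (simp add: card_image inj_on_subset)
  ultimately show "\<exists>H\<subseteq>G. card H = 3 \<and> \<Inter>H \<noteq> {}"
    using \<open>G = S ` J\<close> by (intro exI[of _ "S ` J'"]) auto
qed

text \<open>Edge k of the pentagon lies on the line edge_normal k \<bullet> p = edge_offset k; the edges are
  numbered counterclockwise, vertex k joins edges k and k + 1, and pentagram_tip k is the meeting point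
  of the lines of edges k and k + 2. All indices are taken modulo 5.\<close>

definition edge_normal :: "nat \<Rightarrow> real^2" where
  "edge_normal k = [vector [2, 3], vector [-2, 3], vector [-3, -1], vector [0, -4], vector [3, -1]] ! (k mod 5)"

definition edge_offset :: "nat \<Rightarrow> real" where
  "edge_offset k = [126, 126, 112, 112, 112] ! (k mod 5)"

definition frame :: "(real^2) set" where
  "frame = cbox (vector [-150, -150]) (vector [150, 150])"

definition pentagon :: "(real^2) set" where
  "pentagon = frame \<inter> (\<Inter>k<5. {p. edge_normal k \<bullet> p \<le> edge_offset k})"

definition beyond_edge :: "nat \<Rightarrow> (real^2) set" where
  "beyond_edge k = frame \<inter> {p. edge_offset k \<le> edge_normal k \<bullet> p}"

definition vertex :: "nat \<Rightarrow> real^2" where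
  "vertex k = [vector [0, 42], vector [-42, 14], vector [-28, -28], vector [28, -28], vector [42, 14]] ! (k mod 5)"

definition pentagram_tip :: "nat \<Rightarrow> real^2" where
  "pentagram_tip k = [vector [-66, 86], vector [-105, -28], vector [0, -112], vector [105, -28], vector [66, 86]] ! (k mod 5)"

definition pentagon_family :: "nat \<Rightarrow> (real^2) set" where
  "pentagon_family k = (if k = 5 then pentagon else beyond_edge k)"

lemma mem_frame_vector [simp]: "vector [a, b] \<in> frame \<longleftrightarrow> \<bar>a\<bar> \<le> 150 \<and> \<bar>b\<bar> \<le> 150"
  by (auto simp: frame_def mem_box_cart forall_2)

lemma mem_pentagon:
  "p \<in> pentagon \<longleftrightarrow> p \<in> frame \<and> (\<forall>k<5. edge_normal k \<bullet> p \<le> edge_offset k)"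
  by (auto simp: pentagon_def)

lemma edge_normal_mod [simp]: "edge_normal (k mod 5) = edge_normal k"
  and edge_offset_mod [simp]: "edge_offset (k mod 5) = edge_offset k"
  by (simp_all add: edge_normal_def edge_offset_def)

lemma edge_normal_mod_add: "edge_normal (k mod 5 + j) = edge_normal (k + j)"
  by (metis edge_normal_mod mod_add_left_eq)

lemma beyond_edge_mod [simp]: "beyond_edge (k mod 5) = beyond_edge k"
  by (simp add: beyond_edge_def)

lemma beyond_edge_mod_add: "beyond_edge (k mod 5 + j) = beyond_edge (k + j)"
  by (metis beyond_edge_mod mod_add_left_eq)

lemma vertex_mod: "vertex (k mod 5) = vertex k"
  by (simp add: vertex_def)

lemma pentagram_tip_mod: "pentagram_tip (k mod 5) = pentagram_tip k"
  by (simp add: pentagram_tip_def)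

lemma pentagon_subset_below_edge: "pentagon \<subseteq> {p. edge_normal k \<bullet> p \<le> edge_offset k}"
  using edge_normal_mod[of k] edge_offset_mod[of k]
  unfolding mem_pentagon subset_iff mem_Collect_eq by (metis mod_less_divisor zero_less_numeral)

lemma edge_normals_clockwise:
  "edge_normal (k + 2) $ 1 * edge_normal k $ 2 - edge_normal (k + 2) $ 2 * edge_normal k $ 1 < 0"
proof -
  have "edge_normal (k mod 5 + 2) $ 1 * edge_normal (k mod 5) $ 2
      - edge_normal (k mod 5 + 2) $ 2 * edge_normal (k mod 5) $ 1 < 0"
    by (rule less_5_cases[of "k mod 5"]) (simp_all add: edge_normal_def)
  then show ?thesis
    by (simp only: edge_normal_mod edge_normal_mod_add)
qed

lemma vertex_in_pentagon: "vertex k \<in> pentagon"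
  by (rule less_5_cases[of "k mod 5"])
     (simp_all add: vertex_def mem_pentagon all_less_5 edge_normal_def edge_offset_def)

lemma vertex_in_beyond_edge_iff:
  assumes "j < 5" "k < 5"
  shows "vertex k \<in> beyond_edge j \<longleftrightarrow> j = k \<or> j = Suc k mod 5"
  by (cases rule: less_5_cases[OF assms(1)]; cases rule: less_5_cases[OF assms(2)])
     (simp_all add: vertex_def beyond_edge_def edge_normal_def edge_offset_def)

lemma vertex_in_beyond_edges: "vertex k \<in> beyond_edge k \<inter> beyond_edge (k + 1)"
  using vertex_in_beyond_edge_iff[of "k mod 5" "k mod 5"] vertex_in_beyond_edge_iff[of "Suc k mod 5" "k mod 5"]
  by (simp add: vertex_mod mod_Suc_eq)

lemma pentagram_tip_in_beyond_edges:
  "pentagram_tip k \<in> beyond_edge k \<inter> beyond_edge (k + 1) \<inter> beyond_edge (k + 2)"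
proof -
  have "pentagram_tip (k mod 5) \<in> beyond_edge (k mod 5) \<inter> beyond_edge (k mod 5 + 1) \<inter> beyond_edge (k mod 5 + 2)"
    by (rule less_5_cases[of "k mod 5"])
       (simp_all add: pentagram_tip_def beyond_edge_def edge_normal_def edge_offset_def)
  then show ?thesis
    by (simp only: beyond_edge_mod beyond_edge_mod_add pentagram_tip_mod)
qed

lemma pentagon_beyond_two_edges_disjoint:
  "beyond_edge k \<inter> beyond_edge (k + 2) \<inter> pentagon = {}"
proof -
  \<comment> \<open>The two outer half-planes meet only beyond the line of the edge k + 1 between them.\<close>
  have False if "edge_offset j \<le> edge_normal j \<bullet> p" "edge_offset (j + 2) \<le> edge_normal (j + 2) \<bullet> p"
    "edge_normal (j + 1) \<bullet> p \<le> edge_offset (j + 1)" "j < 5" for j p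
    using that by (cases rule: less_5_cases[OF \<open>j < 5\<close>]) (simp_all add: edge_normal_def edge_offset_def)
  then have "beyond_edge (k mod 5) \<inter> beyond_edge (k mod 5 + 2) \<inter> pentagon = {}"
    unfolding beyond_edge_def using pentagon_subset_below_edge by fastforce
  then show ?thesis
    by (simp only: beyond_edge_mod beyond_edge_mod_add)
qed

lemma orient_beyond_edges_pentagon: "orient_sets (beyond_edge k) (beyond_edge (k + 2)) pentagon = 1"
proof (rule orient_sets_beyond_two_lines[OF beyond_edge_def beyond_edge_def])
  show "pentagon \<subseteq> frame \<inter> {p. edge_normal (k + 2) \<bullet> p \<le> edge_offset (k + 2)}
      \<inter> {p. edge_normal k \<bullet> p \<le> edge_offset k}"
    using pentagon_subset_below_edge unfolding pentagon_def by blast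
  show "edge_normal (k + 2) $ 1 * edge_normal k $ 2 - edge_normal (k + 2) $ 2 * edge_normal k $ 1 < 0"
    by (rule edge_normals_clockwise)
  show "beyond_edge k \<inter> beyond_edge (k + 2) \<inter> pentagon = {}"
    by (rule pentagon_beyond_two_edges_disjoint)
  show "beyond_edge (k + 2) \<inter> pentagon \<noteq> {}" "beyond_edge k \<inter> pentagon \<noteq> {}"
    using vertex_in_beyond_edges vertex_in_pentagon by blast+
  show "beyond_edge k \<inter> beyond_edge (k + 2) \<noteq> {}"
    using pentagram_tip_in_beyond_edges by blast
qed

lemma inj_on_beyond_edge: "inj_on beyond_edge {..<5}"
proof (rule inj_onI)
  fix j k :: nat
  assume "j \<in> {..<5}" "k \<in> {..<5}" "beyond_edge j = beyond_edge k"
  then have "k = j \<or> k = Suc j mod 5" "j = k \<or> j = Suc k mod 5"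
    using vertex_in_beyond_edge_iff[of j j] vertex_in_beyond_edge_iff[of k j]
      vertex_in_beyond_edge_iff[of k k] vertex_in_beyond_edge_iff[of j k] by auto
  then show "j = k"
    using \<open>j \<in> {..<5}\<close> by (auto elim: less_5_cases)
qed

lemma beyond_edge_eq_iff: "beyond_edge j = beyond_edge k \<longleftrightarrow> j mod 5 = k mod 5"
  using inj_on_beyond_edge[THEN inj_onD, of "j mod 5" "k mod 5"]
  by (metis beyond_edge_mod lessThan_iff mod_less_divisor zero_less_numeral)

lemma beyond_edge_ne_pentagon: "beyond_edge k \<noteq> pentagon"
proof -
  have "0 \<in> pentagon"
    by (auto simp: mem_pentagon all_less_5 edge_offset_def frame_def mem_box_cart forall_2)
  moreover have "edge_offset (k mod 5) > 0"
    by (rule less_5_cases[of "k mod 5"]) (simp_all add: edge_offset_def)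
  then have "0 \<notin> beyond_edge k"
    by (simp add: beyond_edge_def)
  ultimately show ?thesis
    by blast
qed

lemma compact_convex_pentagon_family: "compact (pentagon_family k) \<and> convex (pentagon_family k)"
  unfolding pentagon_family_def pentagon_def beyond_edge_def frame_def
  by (auto intro!: closed_halfspace_le closed_halfspace_ge
      convex_Int convex_INT convex_halfspace_le convex_halfspace_ge)

lemma inj_on_pentagon_family: "inj_on pentagon_family {..5}"
proof -
  have "pentagon \<notin> beyond_edge ` {..<5}"
    using beyond_edge_ne_pentagon by auto
  then have "inj_on pentagon_family (insert 5 {..<5})"
    using inj_on_beyond_edge by (simp add: pentagon_family_def inj_on_def) blast
  then show ?thesis
    by (simp add: lessThan_Suc_atMost[symmetric] lessThan_Suc numeral_eq_Suc)
qed

lemma vertex_in_pentagon_family: "vertex k \<in> pentagon_family k" "vertex k \<in> pentagon_family 5"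
  using vertex_in_pentagon vertex_in_beyond_edges by (auto simp: pentagon_family_def)

lemma pentagram_tip_in_pentagon_family:
  assumes "k < 5" "j \<in> {k, Suc k mod 5, Suc (Suc k) mod 5}"
  shows "pentagram_tip k \<in> pentagon_family j"
  using assms pentagram_tip_in_beyond_edges[of k] by (auto simp: pentagon_family_def)

lemma beyond_edge_in_pentagon_family: "beyond_edge k \<in> pentagon_family ` {..5} - {pentagon}"
proof -
  have "beyond_edge k = pentagon_family (k mod 5)"
    by (simp add: pentagon_family_def less_imp_neq)
  then show ?thesis
    using beyond_edge_ne_pentagon by force
qed

lemma pairwise_intersecting_pentagon_family: "pairwise_intersecting (pentagon_family ` {..5})"
  unfolding pairwise_intersecting_def
proof (intro ballI)
  fix A B
  assume "A \<in> pentagon_family ` {..5}" "B \<in> pentagon_family ` {..5}"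
  then obtain i j where ij: "i \<le> 5" "j \<le> 5" "A = pentagon_family i" "B = pentagon_family j"
    by auto
  show "A \<inter> B \<noteq> {}"
  proof (cases "i = 5 \<or> j = 5")
    case True
    then show ?thesis
      using ij vertex_in_pentagon_family[of i] vertex_in_pentagon_family[of j] by blast
  next
    case False
    then obtain m where "m < 5" "{i, j} \<subseteq> {m, Suc m mod 5, Suc (Suc m) mod 5}"
      using ij cycle5_pair_in_window[of i j] by auto
    then show ?thesis
      using ij pentagram_tip_in_pentagon_family by blast
  qed
qed

lemma prop_43_pentagon_family: "prop_43 (pentagon_family ` {..5})"
proof (rule prop_43_image[OF inj_on_pentagon_family])
  fix J :: "nat set"
  assume J: "J \<subseteq> {..5}" "card J = 4"
  show "\<exists>J'\<subseteq>J. card J' = 3 \<and> \<Inter>(pentagon_family ` J') \<noteq> {}"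
  proof (cases "5 \<in> J")
    case True
    have "J - {5} \<subseteq> {..<5}" "card (J - {5}) = 3"
      using J True by auto
    then obtain k where k: "k \<in> J - {5}" "Suc k mod 5 \<in> J - {5}"
      using cycle5_three_has_adjacent by blast
    then have "card {5, k, Suc k mod 5} = 3"
      using \<open>J - {5} \<subseteq> {..<5}\<close> by (auto elim!: less_5_cases)
    moreover have "vertex k \<in> \<Inter>(pentagon_family ` {5, k, Suc k mod 5})"
      using vertex_in_pentagon_family vertex_in_beyond_edges[of k] k by (auto simp: pentagon_family_def)
    ultimately show ?thesis
      using True k by (intro exI[of _ "{5, k, Suc k mod 5}"]) auto
  next
    case False
    then have "J \<subseteq> {..<5}"
      using J(1) by (auto simp: le_less)
    then obtain k where k: "k \<in> J" "Suc k mod 5 \<in> J" "Suc (Suc k) mod 5 \<in> J"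
      using cycle5_four_has_window J(2) by blast
    then have "k < 5" "card {k, Suc k mod 5, Suc (Suc k) mod 5} = 3"
      using \<open>J \<subseteq> {..<5}\<close> by (auto elim!: less_5_cases)
    moreover have "pentagram_tip k \<in> \<Inter>(pentagon_family ` {k, Suc k mod 5, Suc (Suc k) mod 5})"
      using pentagram_tip_in_pentagon_family \<open>k < 5\<close> by blast
    ultimately show ?thesis
      using k by (intro exI[of _ "{k, Suc k mod 5, Suc (Suc k) mod 5}"]) auto
  qed
qed

theorem claim9:
  shows "\<exists>(F :: (real^2) set set) D.
     finite F \<and> (\<forall>A\<in>F. compact A \<and> convex A) \<and> pairwise_intersecting F \<and> prop_43 F \<and>
     D \<in> F \<and>
     (\<exists>c :: nat \<Rightarrow> (real^2) set. inj_on c {0..<5} \<and>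
        (\<forall>i<5. arc_G F D (c i) (c ((i + 1) mod 5))))"
proof -
  let ?F = "pentagon_family ` {..5}" and ?c = "\<lambda>i. beyond_edge (2 * i)"
  have "inj_on ?c {0..<5}"
    by (auto simp: inj_on_def beyond_edge_eq_iff elim!: less_5_cases)
  moreover have "arc_G ?F pentagon (?c i) (?c ((i + 1) mod 5))" for i
  proof -
    have "?c ((i + 1) mod 5) = beyond_edge (2 * i + 2)"
      by (simp add: beyond_edge_eq_iff mod_mult_right_eq)
    then show ?thesis
      using beyond_edge_in_pentagon_family orient_beyond_edges_pentagon by (simp add: arc_G_def)
  qed
  moreover have "pentagon \<in> ?F"
    using pentagon_family_def by force
  ultimately show ?thesis
    using compact_convex_pentagon_family pairwise_intersecting_pentagon_family prop_43_pentagon_family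
    by blast
qed

end
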